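(* Let $G=(V,E;w)$ be a finite simple graph with positive edge weights. The matching game $\Gamma_G$ is population monotonic if and only if every connected component of $G$ with at least two vertices is a double-star whose two centers $u,v$ (for a suitable choice of the double-star decomposition) form a dominant pair.
   Context: $G=(V,E;w)$ is a finite simple graph with edge weights $w:E\to\mathbb{R}$, $w_e>0$ for all $e\in E$; $w_{ij}$ is the weight of edge $ij$. The matching game on $G$ is the cooperative game $\Gamma_G=(N,\gamma)$ with $N=V$ and $\gamma(S)$ the maximum weight of a matching in $G[S]$ ($\gamma(\emptyset)=0$). A population monotonic allocation scheme (PMAS) is a family $(\boldsymbol{x}_S)_{\emptyset\neq S\subseteq N}$, $\boldsymbol{x}_S=(x_{S,i})_{i\in S}\in\mathbb{R}^S$, with (efficiency) $\sum_{i\in S}x_{S,i}=\gamma(S)$ for all nonempty $S$ and (monotonicity) $x_{S,i}\le x_{T,i}$ whenever $\emptyset\ne S\subseteq T\subseteq N$, $i\in S$; $\Gamma_G$ is population monotonic if it admits a PMAS. A double-star is a graph whose vertex set is partitioned into a set $K=\{u,v\}$ of two adjacent vertices (the centers) and an independent set $I$, such that every vertex of $I$ is adjacent to at least one of $u,v$ (so all edges lie within $K$ or between $K$ and $I$; a star with at least one edge is a double-star, taking as centers the star's center and one leaf). Adjacent vertices $u,v$ form a dominant pair if $w_{uv}\ge w_{uu'}+w_{vv'}$ for all edges $uu'\ne uv$ and $vv'\ne uv$ (with $u'=v'$ allowed), and moreover, if one of them, say $v$, has no incident edge other than $uv$, then $w_{uv}\ge w_{uu'}$ for every edge $uu'\ne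 uv$; equivalently, $w_{uv}\ge\sigma_u+\sigma_v$ where $\sigma_u$ (resp. $\sigma_v$) is the maximum weight of an edge other than $uv$ incident to $u$ (resp. $v$), or $0$ if none exists. *)

theory Defs
  imports Complex_Main
begin

definition simple_graph :: "'a set \<Rightarrow> 'a set set \<Rightarrow> bool" where
  "simple_graph V E \<longleftrightarrow> finite V \<and>
     (\<forall>e\<in>E. \<exists>a b. a \<noteq> b \<and> a \<in> V \<and> b \<in> V \<and> e = {a, b})"

definition matching_in :: "'a set set \<Rightarrow> 'a set \<Rightarrow> 'a set set \<Rightarrow> bool" where
  "matching_in E S M \<longleftrightarrow> M \<subseteq> E \<and> (\<forall>e\<in>M. e \<subseteq> S) \<and>
     (\<forall>e\<in>M. \<forall>f\<in>M. e \<noteq> f \<longrightarrow> e \<inter> f = {})"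

definition gamma :: "'a set set \<Rightarrow> ('a set \<Rightarrow> real) \<Rightarrow> 'a set \<Rightarrow> real" where
  "gamma E w S = Max ((\<lambda>M. sum w M) ` {M. matching_in E S M})"

definition is_PMAS :: "'a set \<Rightarrow> 'a set set \<Rightarrow> ('a set \<Rightarrow> real) \<Rightarrow> ('a set \<Rightarrow> 'a \<Rightarrow> real) \<Rightarrow> bool" where
  "is_PMAS V E w x \<longleftrightarrow>
     (\<forall>S. S \<noteq> {} \<and> S \<subseteq> V \<longrightarrow> (\<Sum>i\<in>S. x S i) = gamma E w S) \<and>
     (\<forall>S T i. S \<noteq> {} \<and> S \<subseteq> T \<and> T \<subseteq> V \<and> i \<in> S \<longrightarrow> x S i \<le> x T i)"

definition population_monotonic :: "'a set \<Rightarrow> 'a set set \<Rightarrow> ('a set \<Rightarrow> real) \<Rightarrow> bool" where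
  "population_monotonic V E w \<longleftrightarrow> (\<exists>x. is_PMAS V E w x)"

definition adj :: "'a set set \<Rightarrow> 'a \<Rightarrow> 'a \<Rightarrow> bool" where
  "adj E a b \<longleftrightarrow> {a, b} \<in> E"

definition component :: "'a set set \<Rightarrow> 'a \<Rightarrow> 'a set" where
  "component E v = {u. (adj E)\<^sup>*\<^sup>* v u}"

definition components :: "'a set \<Rightarrow> 'a set set \<Rightarrow> 'a set set" where
  "components V E = component E ` V"

text \<open>The subgraph induced by C is a double-star with adjacent centers u, v:
  C - {u,v} is independent and every vertex of it is adjacent to u or v.\<close>
definition double_star_centers :: "'a set set \<Rightarrow> 'a set \<Rightarrow> 'a \<Rightarrow> 'a \<Rightarrow> bool" where
  "double_star_centers E C u v \<longleftrightarrow> u \<in> C \<and> v \<in> C \<and> u \<noteq> v \<and> {u, v} \<in> E \<and>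
     (\<forall>e\<in>E. e \<subseteq> C \<longrightarrow> u \<in> e \<or> v \<in> e) \<and>
     (\<forall>i\<in>C - {u, v}. {u, i} \<in> E \<or> {v, i} \<in> E)"

definition dominant_pair :: "'a set set \<Rightarrow> ('a set \<Rightarrow> real) \<Rightarrow> 'a \<Rightarrow> 'a \<Rightarrow> bool" where
  "dominant_pair E w u v \<longleftrightarrow> {u, v} \<in> E \<and>
     (\<forall>u' v'. {u, u'} \<in> E \<and> {u, u'} \<noteq> {u, v} \<and> {v, v'} \<in> E \<and> {v, v'} \<noteq> {u, v} \<longrightarrow>
        w {u, v} \<ge> w {u, u'} + w {v, v'}) \<and>
     ((\<forall>v'. {v, v'} \<in> E \<longrightarrow> {v, v'} = {u, v}) \<longrightarrow>
        (\<forall>u'. {u, u'} \<in> E \<and> {u, u'} \<noteq> {u, v} \<longrightarrow> w {u, v} \<ge> w {u, u'})) \<and>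
     ((\<forall>u'. {u, u'} \<in> E \<longrightarrow> {u, u'} = {u, v}) \<longrightarrow>
        (\<forall>v'. {v, v'} \<in> E \<and> {v, v'} \<noteq> {u, v} \<longrightarrow> w {u, v} \<ge> w {v, v'}))"

end

theory Submission
  imports Defs
begin

text \<open>
  For a PMAS \<open>x\<close> and an edge \<open>ab\<close> inside \<open>T\<close>, efficiency on \<open>{a, b}\<close> and
  monotonicity give \<open>w\<^sub>a\<^sub>b \<le> x\<^sub>T(a) + x\<^sub>T(b)\<close>. Summing this along a path \<open>p q r s\<close> and
  using efficiency on \<open>{p, q, r}\<close> and \<open>{q, r, s}\<close> yields
  \<open>w\<^sub>p\<^sub>q + w\<^sub>q\<^sub>r + w\<^sub>r\<^sub>s \<le> \<gamma>{p, q, r} + \<gamma>{q, r, s}\<close>, and \<open>\<gamma>\<close> of three vertices is a single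
  edge weight. Around a heaviest edge \<open>uv\<close> of a component this rules out any path \<open>u a b\<close>
  with \<open>a, b \<notin> {u, v}\<close>, so the component is a double star with centres \<open>u, v\<close>, and it
  gives \<open>w\<^sub>u\<^sub>u\<^sub>' + w\<^sub>v\<^sub>v\<^sub>' \<le> w\<^sub>u\<^sub>v\<close>, i.e. dominance.

  The allocation below is monotone because \<open>w\<^sub>u\<^sub>v - \<sigma>\<^sub>u \<ge> \<sigma>\<^sub>v\<close>. Every edge
  inside a coalition is paid for by its endpoints, which gives \<open>\<gamma> \<le> \<Sum>x\<close>; conversely, in
  each component the positive shares add up to the weight of at most one edge of the
  coalition, and \<open>\<gamma>\<close> is superadditive on disjoint vertex sets.
\<close>

locale weighted_graph =
  fixes V :: "'a set" and E :: "'a set set" and w :: "'a set \<Rightarrow> real"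
  assumes simple: "simple_graph V E" and weight_pos: "\<forall>e\<in>E. w e > 0"
begin

lemma edgeE:
  assumes "e \<in> E"
  obtains a b where "a \<noteq> b" "a \<in> V" "b \<in> V" "e = {a, b}"
  using simple assms unfolding simple_graph_def by blast

lemma finite_V: "finite V"
  using simple simple_graph_def by blast

lemma edge_subset_V: "e \<in> E \<Longrightarrow> e \<subseteq> V"
  by (erule edgeE) auto

lemma finite_E: "finite E"
  by (rule finite_subset[of _ "Pow V"]) (use edge_subset_V finite_V in auto)

lemma edge_ends_in_V: "{a, b} \<in> E \<Longrightarrow> a \<in> V \<and> b \<in> V"
  using edge_subset_V by blast

lemma edge_ends_distinct: "{a, b} \<in> E \<Longrightarrow> a \<noteq> b"
  by (erule edgeE) (auto simp: doubleton_eq_iff)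

lemma edge_at: "e \<in> E \<Longrightarrow> u \<in> e \<Longrightarrow> \<exists>u'. e = {u, u'}"
  by (erule edgeE) auto

lemma edge_weight_pos: "e \<in> E \<Longrightarrow> 0 < w e"
  using weight_pos by blast

lemma edge_subset_triple:
  "e \<in> E \<Longrightarrow> e \<subseteq> {p, q, r} \<Longrightarrow> e = {p, q} \<or> e = {q, r} \<or> e = {p, r}"
  by (erule edgeE) (auto simp: insert_commute)

subsection \<open>The characteristic function\<close>

lemma finite_matchings: "finite {M. matching_in E S M}"
  by (rule finite_subset[of _ "Pow E"]) (use finite_E in \<open>auto simp: matching_in_def\<close>)

lemma matching_empty: "matching_in E S {}"
  by (simp add: matching_in_def)

lemma matching_weight_le_gamma: "matching_in E S M \<Longrightarrow> sum w M \<le> gamma E w S"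
  unfolding gamma_def using finite_matchings by (intro Max_ge) auto

lemma gamma_le: "(\<And>M. matching_in E S M \<Longrightarrow> sum w M \<le> c) \<Longrightarrow> gamma E w S \<le> c"
  unfolding gamma_def using finite_matchings matching_empty by (subst Max_le_iff) auto

lemma gamma_attained: "\<exists>M. matching_in E S M \<and> gamma E w S = sum w M"
proof -
  have "gamma E w S \<in> (\<lambda>M. sum w M) ` {M. matching_in E S M}"
    unfolding gamma_def using finite_matchings matching_empty by (intro Max_in) auto
  thus ?thesis by auto
qed

lemma edge_weight_le_gamma: "e \<in> E \<Longrightarrow> e \<subseteq> S \<Longrightarrow> w e \<le> gamma E w S"
  using matching_weight_le_gamma[of S "{e}"] by (simp add: matching_in_def)

lemma gamma_nonneg: "0 \<le> gamma E w S"
  using matching_weight_le_gamma[OF matching_empty] by simp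

lemma matching_in_Un:
  assumes M: "matching_in E A M" and N: "matching_in E B N" and AB: "A \<inter> B = {}"
  shows "matching_in E (A \<union> B) (M \<union> N)" "M \<inter> N = {}"
proof -
  have apart: "e \<inter> f = {}" if "e \<in> M" "f \<in> N" for e f
  proof -
    have "e \<subseteq> A" "f \<subseteq> B" using M N that unfolding matching_in_def by auto
    thus ?thesis using AB by blast
  qed
  show "M \<inter> N = {}"
  proof (rule ccontr)
    assume "M \<inter> N \<noteq> {}"
    then obtain e where "e \<in> M" "e \<in> N" "e \<in> E" using M unfolding matching_in_def by blast
    thus False using apart[of e e] by (auto elim: edgeE)
  qed
  have "e \<inter> f = {}" if "e \<in> M \<union> N" "f \<in> M \<union> N" "e \<noteq> f" for e f
  proof (cases "e \<in> M")
    case True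
    thus ?thesis using M apart[of e f] that unfolding matching_in_def by blast
  next
    case False
    thus ?thesis using N apart[of f e] that unfolding matching_in_def by (blast intro: Int_commute)
  qed
  moreover have "M \<union> N \<subseteq> E" "\<forall>e\<in>M \<union> N. e \<subseteq> A \<union> B"
    using M N unfolding matching_in_def by auto
  ultimately show "matching_in E (A \<union> B) (M \<union> N)"
    unfolding matching_in_def by blast
qed

lemma gamma_disjoint_Un:
  assumes "A \<inter> B = {}"
  shows "gamma E w A + gamma E w B \<le> gamma E w (A \<union> B)"
proof -
  obtain M where M: "matching_in E A M" "gamma E w A = sum w M"
    using gamma_attained[of A] by auto
  obtain N where N: "matching_in E B N" "gamma E w B = sum w N"
    using gamma_attained[of B] by auto
  have "finite M" "finite N"
    using M(1) N(1) finite_subset[OF _ finite_E] unfolding matching_in_def by auto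
  hence "sum w M + sum w N = sum w (M \<union> N)"
    using matching_in_Un(2)[OF M(1) N(1) assms] by (simp add: sum.union_disjoint)
  also have "\<dots> \<le> gamma E w (A \<union> B)"
    using matching_in_Un(1)[OF M(1) N(1) assms] by (rule matching_weight_le_gamma)
  finally show ?thesis using M(2) N(2) by simp
qed

lemma gamma_sum_le_UN:
  assumes "finite I" "\<And>i j. i \<in> I \<Longrightarrow> j \<in> I \<Longrightarrow> i \<noteq> j \<Longrightarrow> A i \<inter> A j = {}"
  shows "(\<Sum>i\<in>I. gamma E w (A i)) \<le> gamma E w (\<Union>i\<in>I. A i)"
  using assms
proof (induction I rule: finite_induct)
  case empty
  show ?case using gamma_nonneg by simp
next
  case (insert i I)
  have "(\<Sum>j\<in>insert i I. gamma E w (A j)) \<le> gamma E w (A i) + gamma E w (\<Union>j\<in>I. A j)"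
    using insert by simp
  also have "\<dots> \<le> gamma E w (\<Union>j\<in>insert i I. A j)"
    using gamma_disjoint_Un[of "A i" "\<Union>j\<in>I. A j"] insert by auto
  finally show ?case .
qed

lemma matching_in_small_set:
  assumes "matching_in E T M" "finite T" "card T \<le> 3"
  shows "M = {} \<or> (\<exists>e. M = {e})"
proof (rule ccontr)
  assume "\<not> ?thesis"
  then obtain e f where ef: "e \<in> M" "f \<in> M" "e \<noteq> f" by blast
  have E: "e \<in> E" "f \<in> E" "e \<subseteq> T" "f \<subseteq> T" "e \<inter> f = {}"
    using assms(1) ef unfolding matching_in_def by auto
  have "card e = 2" "card f = 2"
    using E(1,2) by (auto elim!: edgeE)
  hence "card (e \<union> f) = 4"
    using E(5) card_Un_disjoint[of e f] card.infinite[of e] by fastforce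
  moreover have "card (e \<union> f) \<le> card T"
    using E assms(2) by (intro card_mono) auto
  ultimately show False using assms(3) by simp
qed

lemma gamma_small_set:
  assumes "finite T" "card T \<le> 3"
  shows "gamma E w T = 0 \<or> (\<exists>e\<in>E. e \<subseteq> T \<and> gamma E w T = w e)"
proof -
  obtain M where M: "matching_in E T M" "gamma E w T = sum w M"
    using gamma_attained[of T] by auto
  from matching_in_small_set[OF M(1) assms] show ?thesis
  proof
    assume "\<exists>e. M = {e}"
    then obtain e where "M = {e}" by blast
    thus ?thesis using M unfolding matching_in_def by auto
  qed (use M in simp)
qed

lemma gamma_triple_le:
  assumes "\<And>e. e \<in> E \<Longrightarrow> e \<subseteq> {p, q, r} \<Longrightarrow> w e \<le> m" "0 \<le> m"
  shows "gamma E w {p, q, r} \<le> m"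
proof -
  have "card {p, q, r} \<le> 3" by (simp add: card_insert_if)
  thus ?thesis using gamma_small_set[of "{p, q, r}"] assms by auto
qed

subsection \<open>Connected components\<close>

lemma adj_sym: "adj E a b \<Longrightarrow> adj E b a"
  by (simp add: adj_def insert_commute)

lemma in_component: "a \<in> component E a"
  by (simp add: component_def)

lemma component_edge_closed: "a \<in> component E c \<Longrightarrow> {a, b} \<in> E \<Longrightarrow> b \<in> component E c"
  unfolding component_def adj_def by (auto intro: rtranclp.rtrancl_into_rtrancl)

lemma component_eq: "b \<in> component E a \<Longrightarrow> component E b = component E a"
proof -
  have sym: "(adj E)\<^sup>*\<^sup>* q p" if "(adj E)\<^sup>*\<^sup>* p q" for p q
    using that by (induction rule: rtranclp_induct) (auto intro: converse_rtranclp_into_rtranclp adj_sym)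
  show "b \<in> component E a \<Longrightarrow> component E b = component E a"
    unfolding component_def by (auto intro: rtranclp_trans sym)
qed

lemma component_subset_V: "a \<in> V \<Longrightarrow> component E a \<subseteq> V"
proof
  fix b assume "a \<in> V" "b \<in> component E a"
  from \<open>b \<in> component E a\<close> have "(adj E)\<^sup>*\<^sup>* a b" by (simp add: component_def)
  thus "b \<in> V"
    by (induction rule: rtranclp_induct) (use \<open>a \<in> V\<close> edge_ends_in_V in \<open>auto simp: adj_def\<close>)
qed

lemma finite_component: "a \<in> V \<Longrightarrow> finite (component E a)"
  using component_subset_V finite_subset[OF _ finite_V] by blast

lemma card_component_edge:
  assumes "{a, b} \<in> E"
  shows "2 \<le> card (component E a)"
proof -
  have "b \<in> component E a" using component_edge_closed[OF in_component assms] .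
  hence "{a, b} \<subseteq> component E a" using in_component by simp
  moreover have "finite (component E a)" using finite_component edge_ends_in_V assms by simp
  ultimately have "card {a, b} \<le> card (component E a)" by (rule card_mono[rotated])
  thus ?thesis using edge_ends_distinct assms by simp
qed

lemma component_max_weight_edge:
  assumes "c \<in> V" "2 \<le> card (component E c)"
  obtains u v where "{u, v} \<in> E" "u \<in> component E c" "v \<in> component E c"
    "\<And>e. e \<in> E \<Longrightarrow> e \<subseteq> component E c \<Longrightarrow> w e \<le> w {u, v}"
proof -
  let ?C = "component E c"
  define F where "F = {e \<in> E. e \<subseteq> ?C}"
  have "?C \<noteq> {c}" using assms(2) by auto
  then obtain y where "y \<in> ?C" "y \<noteq> c" using in_component by auto
  hence "(adj E)\<^sup>*\<^sup>* c y" unfolding component_def by simp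
  then obtain z where "{c, z} \<in> E"
    using \<open>y \<noteq> c\<close> unfolding adj_def by (cases rule: converse_rtranclpE) auto
  moreover have "z \<in> ?C" using component_edge_closed[OF in_component calculation] .
  ultimately have "{c, z} \<in> F" unfolding F_def using in_component by simp
  moreover have "finite F" unfolding F_def using finite_E by simp
  ultimately have "Max (w ` F) \<in> w ` F" by (intro Max_in) auto
  then obtain e0 where e0: "e0 \<in> F" "w e0 = Max (w ` F)" by auto
  then obtain u v where uv: "e0 = {u, v}" unfolding F_def by (auto elim: edgeE)
  have "w e \<le> w e0" if "e \<in> E" "e \<subseteq> ?C" for e
    using e0(2) Max_ge[of "w ` F" "w e"] \<open>finite F\<close> that unfolding F_def by simp
  with e0(1) show thesis unfolding uv F_def by (intro that) auto
qed

subsection \<open>Necessity\<close>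

definition locally_heaviest :: "'a \<Rightarrow> 'a \<Rightarrow> bool" where
  "locally_heaviest u v \<longleftrightarrow> {u, v} \<in> E \<and> (\<forall>e\<in>E. u \<in> e \<or> v \<in> e \<longrightarrow> w e \<le> w {u, v})"

lemma locally_heaviest_commute: "locally_heaviest u v \<Longrightarrow> locally_heaviest v u"
  unfolding locally_heaviest_def by (simp add: insert_commute disj_commute)

context
  fixes x :: "'a set \<Rightarrow> 'a \<Rightarrow> real"
  assumes pmas: "is_PMAS V E w x"
begin

lemma pmas_efficient: "S \<noteq> {} \<Longrightarrow> S \<subseteq> V \<Longrightarrow> (\<Sum>i\<in>S. x S i) = gamma E w S"
  using pmas unfolding is_PMAS_def by blast

lemma pmas_monotone: "S \<noteq> {} \<Longrightarrow> S \<subseteq> T \<Longrightarrow> T \<subseteq> V \<Longrightarrow> i \<in> S \<Longrightarrow> x S i \<le> x T i"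
  using pmas unfolding is_PMAS_def by blast

lemma pmas_edge_le:
  assumes "{a, b} \<in> E" "{a, b} \<subseteq> T" "T \<subseteq> V"
  shows "w {a, b} \<le> x T a + x T b"
proof -
  have "w {a, b} \<le> gamma E w {a, b}" using edge_weight_le_gamma assms(1) by blast
  also have "\<dots> = x {a, b} a + x {a, b} b"
    using pmas_efficient[of "{a, b}"] edge_ends_distinct[OF assms(1)] assms(2,3) by force
  also have "\<dots> \<le> x T a + x T b"
    using pmas_monotone[of "{a, b}" T] assms by (intro add_mono) auto
  finally show ?thesis .
qed

lemma pmas_path_le:
  assumes "distinct [p, q, r, s]" "{p, q} \<in> E" "{q, r} \<in> E" "{r, s} \<in> E"
  shows "w {p, q} + w {q, r} + w {r, s} \<le> gamma E w {p, q, r} + gamma E w {q, r, s}"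
proof -
  have V: "p \<in> V" "q \<in> V" "r \<in> V" "s \<in> V" using edge_ends_in_V assms by blast+
  have "x {p, q, r} p + x {p, q, r} q + x {p, q, r} r = gamma E w {p, q, r}"
    "x {q, r, s} q + x {q, r, s} r + x {q, r, s} s = gamma E w {q, r, s}"
    using pmas_efficient[of "{p, q, r}"] pmas_efficient[of "{q, r, s}"] V assms(1)
    by (simp_all add: add.assoc)
  moreover have "w {p, q} \<le> x {p, q, r} p + x {p, q, r} q"
    "w {q, r} \<le> x {q, r} q + x {q, r} r"
    "w {r, s} \<le> x {q, r, s} r + x {q, r, s} s"
    using pmas_edge_le V assms by auto
  moreover have "x {q, r} r \<le> x {p, q, r} r" "x {q, r} q \<le> x {q, r, s} q"
    using pmas_monotone V by auto
  ultimately show ?thesis by linarith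
qed

lemma pmas_triangle_le:
  assumes "{p, q} \<in> E" "{q, r} \<in> E" "{p, r} \<in> E"
  shows "w {p, q} + w {q, r} + w {p, r} \<le> 2 * gamma E w {p, q, r}"
proof -
  have V: "p \<in> V" "q \<in> V" "r \<in> V" using edge_ends_in_V assms by blast+
  have "distinct [p, q, r]" using edge_ends_distinct assms by auto
  hence "x {p, q, r} p + x {p, q, r} q + x {p, q, r} r = gamma E w {p, q, r}"
    using pmas_efficient[of "{p, q, r}"] V by (simp add: add.assoc)
  moreover have "w {p, q} \<le> x {p, q, r} p + x {p, q, r} q"
    "w {q, r} \<le> x {p, q, r} q + x {p, q, r} r"
    "w {p, r} \<le> x {p, q, r} p + x {p, q, r} r"
    using pmas_edge_le V assms by auto
  ultimately show ?thesis by linarith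
qed

lemma pmas_heaviest_no_pendant_path:
  assumes uv: "locally_heaviest u v"
    and ab: "a \<notin> {u, v}" "b \<notin> {u, v}" "{u, a} \<in> E" "{a, b} \<in> E"
  shows False
proof -
  have uvE: "{u, v} \<in> E" and heavy: "\<And>e. e \<in> E \<Longrightarrow> u \<in> e \<or> v \<in> e \<Longrightarrow> w e \<le> w {u, v}"
    using uv unfolding locally_heaviest_def by auto
  have extend: "w {u, y} + w {y, z} \<le> gamma E w {u, y, z}"
    if "y \<notin> {u, v}" "z \<notin> {u, v}" "{u, y} \<in> E" "{y, z} \<in> E" for y z
  proof -
    have "distinct [v, u, y, z]" using that edge_ends_distinct[OF uvE] edge_ends_distinct[OF that(4)] by auto
    moreover have "{v, u} \<in> E" using uvE by (simp add: insert_commute)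
    ultimately have "w {v, u} + w {u, y} + w {y, z} \<le> gamma E w {v, u, y} + gamma E w {u, y, z}"
      using pmas_path_le that(3,4) by blast
    moreover have "gamma E w {v, u, y} \<le> w {u, v}"
    proof (rule gamma_triple_le)
      show "w e \<le> w {u, v}" if "e \<in> E" "e \<subseteq> {v, u, y}" for e
        using edge_subset_triple[OF that] heavy that(1) by auto
    qed (use edge_weight_pos[OF uvE] in simp)
    ultimately show ?thesis by (simp add: insert_commute)
  qed
  have pos: "0 < w {u, a}" "0 < w {a, b}" using edge_weight_pos ab by auto
  have "card {u, a, b} \<le> 3" by (simp add: card_insert_if)
  then consider "gamma E w {u, a, b} = 0" | e where "e \<in> E" "e \<subseteq> {u, a, b}" "gamma E w {u, a, b} = w e"
    using gamma_small_set[of "{u, a, b}"] by auto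
  thus False
  proof cases
    case 1
    thus False using extend[OF ab] pos by simp
  next
    case 2
    then consider "e = {u, a}" | "e = {a, b}" | "e = {u, b}" using edge_subset_triple by blast
    thus False
    proof cases
      case 3
      have "{b, a} \<in> E" using ab(4) by (simp add: insert_commute)
      hence "w {u, b} + w {b, a} \<le> gamma E w {u, b, a}" using extend ab 2 3 by blast
      thus False using 2 3 pos by (simp add: insert_commute)
    qed (use extend[OF ab] 2 pos in auto)
  qed
qed

lemma pmas_heaviest_double_star:
  assumes uv: "locally_heaviest u v"
  shows "double_star_centers E (component E u) u v"
proof -
  let ?C = "component E u"
  have uvE: "{u, v} \<in> E" using uv unfolding locally_heaviest_def by blast
  have absorb: "b \<in> {u, v}" if "a \<notin> {u, v}" "{u, a} \<in> E \<or> {v, a} \<in> E" "{a, b} \<in> E" for a b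
  proof (rule ccontr)
    assume "b \<notin> {u, v}"
    moreover have "a \<notin> {v, u}" "b \<notin> {v, u} \<longleftrightarrow> b \<notin> {u, v}" using that(1) by auto
    ultimately show False
      using that(2,3) pmas_heaviest_no_pendant_path[OF uv, of a b]
        pmas_heaviest_no_pendant_path[OF locally_heaviest_commute[OF uv], of a b]
      by blast
  qed
  have near: "y \<in> {u, v} \<or> {u, y} \<in> E \<or> {v, y} \<in> E" if "y \<in> ?C" for y
  proof -
    from that have "(adj E)\<^sup>*\<^sup>* u y" by (simp add: component_def)
    thus ?thesis
    proof (induction rule: rtranclp_induct)
      case (step y z)
      hence "{y, z} \<in> E" by (simp add: adj_def)
      thus ?case using step.IH absorb by (cases "y \<in> {u, v}") (auto simp: insert_commute)
    qed simp
  qed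
  show ?thesis
    unfolding double_star_centers_def
  proof (intro conjI ballI impI)
    show "v \<in> ?C" using component_edge_closed[OF in_component uvE] .
    show "u \<noteq> v" using edge_ends_distinct[OF uvE] .
    fix e assume "e \<in> E" "e \<subseteq> ?C"
    moreover obtain a b where "e = {a, b}" using \<open>e \<in> E\<close> by (rule edgeE)
    ultimately have e: "e = {a, b}" "{a, b} \<in> E" "a \<in> ?C" by auto
    show "u \<in> e \<or> v \<in> e"
      using absorb[of a b] near[of a] e by (cases "a \<in> {u, v}") auto
  qed (use in_component uvE in \<open>auto dest: near\<close>)
qed

lemma pmas_heaviest_dominant_pair:
  assumes uv: "locally_heaviest u v"
  shows "dominant_pair E w u v"
proof -
  have uvE: "{u, v} \<in> E" and heavy: "\<And>e. e \<in> E \<Longrightarrow> u \<in> e \<or> v \<in> e \<Longrightarrow> w e \<le> w {u, v}"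
    using uv unfolding locally_heaviest_def by auto
  have triple: "gamma E w {p, q, r} \<le> w {u, v}" if "u \<in> {p, q, r}" "v \<in> {p, q, r}" for p q r
  proof (rule gamma_triple_le)
    show "w e \<le> w {u, v}" if "e \<in> E" "e \<subseteq> {p, q, r}" for e
      using edge_subset_triple[OF that] heavy[OF that(1)] edge_ends_distinct[OF uvE]
        \<open>u \<in> {p, q, r}\<close> \<open>v \<in> {p, q, r}\<close>
      by auto
  qed (use edge_weight_pos[OF uvE] in simp)
  have "w {u, u'} + w {v, v'} \<le> w {u, v}"
    if "{u, u'} \<in> E" "{u, u'} \<noteq> {u, v}" "{v, v'} \<in> E" "{v, v'} \<noteq> {u, v}" for u' v'
  proof (cases "u' = v'")
    case True
    have "w {u, v} + w {v, u'} + w {u, u'} \<le> 2 * gamma E w {u, v, u'}"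
      using pmas_triangle_le[OF uvE] that True by blast
    thus ?thesis using triple[of u v u'] True by simp
  next
    case False
    have "distinct [u', u, v, v']"
      using that False edge_ends_distinct[OF uvE] edge_ends_distinct[OF that(1)]
        edge_ends_distinct[OF that(3)]
      by (auto simp: insert_commute)
    moreover have "{u', u} \<in> E" using that(1) by (simp add: insert_commute)
    ultimately have "w {u', u} + w {u, v} + w {v, v'} \<le> gamma E w {u', u, v} + gamma E w {u, v, v'}"
      using pmas_path_le uvE that(3) by blast
    thus ?thesis using triple[of u' u v] triple[of u v v'] by (simp add: insert_commute)
  qed
  moreover have "w {u, u'} \<le> w {u, v}" if "{u, u'} \<in> E" for u'
    using heavy that by simp
  moreover have "w {v, v'} \<le> w {u, v}" if "{v, v'} \<in> E" for v'
    using heavy that by simp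
  ultimately show ?thesis
    unfolding dominant_pair_def using uvE by blast
qed

lemma pmas_component_dominant_double_star:
  assumes "C \<in> components V E" "2 \<le> card C"
  shows "\<exists>u v. double_star_centers E C u v \<and> dominant_pair E w u v"
proof -
  obtain c where c: "c \<in> V" "C = component E c" using assms(1) by (auto simp: components_def)
  then obtain u v where uv: "{u, v} \<in> E" "u \<in> C" "v \<in> C"
    and heaviest: "\<And>e. e \<in> E \<Longrightarrow> e \<subseteq> C \<Longrightarrow> w e \<le> w {u, v}"
    using component_max_weight_edge assms(2) by blast
  have C: "C = component E u" using component_eq[of u c] c(2) uv(2) by simp
  have closed: "e \<subseteq> C" if "e \<in> E" "y \<in> e" "y \<in> C" for e y
    using edge_at[OF that(1,2)] component_edge_closed that c(2) by auto
  have "w e \<le> w {u, v}" if "e \<in> E" "u \<in> e \<or> v \<in> e" for e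
    using that heaviest[of e] closed[of e u] closed[of e v] uv(2,3) by auto
  hence "locally_heaviest u v"
    unfolding locally_heaviest_def using uv(1) by simp
  thus ?thesis
    using pmas_heaviest_double_star pmas_heaviest_dominant_pair C by blast
qed

end

subsection \<open>Sufficiency\<close>

definition sigma :: "'a \<Rightarrow> 'a \<Rightarrow> real" where
  "sigma u v = Max (insert 0 (w ` {e \<in> E. u \<in> e \<and> e \<noteq> {u, v}}))"

definition max_incident :: "'a \<Rightarrow> 'a set \<Rightarrow> real" where
  "max_incident i S = Max (insert 0 (w ` {e \<in> E. i \<in> e \<and> e \<subseteq> S}))"

lemma sigma_ge: "e \<in> E \<Longrightarrow> u \<in> e \<Longrightarrow> e \<noteq> {u, v} \<Longrightarrow> w e \<le> sigma u v"
  unfolding sigma_def using finite_E by (intro Max_ge) auto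

lemma sigma_nonneg: "0 \<le> sigma u v"
  unfolding sigma_def using finite_E by (intro Max_ge) auto

lemma sigma_cases:
  obtains "sigma u v = 0" | u' where "{u, u'} \<in> E" "{u, u'} \<noteq> {u, v}" "sigma u v = w {u, u'}"
proof -
  have "sigma u v \<in> insert 0 (w ` {e \<in> E. u \<in> e \<and> e \<noteq> {u, v}})"
    unfolding sigma_def using finite_E by (intro Max_in) auto
  thus thesis using that edge_at by fastforce
qed

lemma max_incident_ge: "e \<in> E \<Longrightarrow> i \<in> e \<Longrightarrow> e \<subseteq> S \<Longrightarrow> w e \<le> max_incident i S"
  unfolding max_incident_def using finite_E by (intro Max_ge) auto

lemma max_incident_nonneg: "0 \<le> max_incident i S"
  unfolding max_incident_def using finite_E by (intro Max_ge) auto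

lemma max_incident_mono: "S \<subseteq> T \<Longrightarrow> max_incident i S \<le> max_incident i T"
  unfolding max_incident_def using finite_E by (intro Max_mono) auto

lemma max_incident_cases:
  obtains "max_incident i S = 0" | e where "e \<in> E" "i \<in> e" "e \<subseteq> S" "max_incident i S = w e"
proof -
  have "max_incident i S \<in> insert 0 (w ` {e \<in> E. i \<in> e \<and> e \<subseteq> S})"
    unfolding max_incident_def using finite_E by (intro Max_in) auto
  thus thesis using that by auto
qed

lemma max_incident_le_sigma:
  assumes "v \<notin> S"
  shows "max_incident u S \<le> sigma u v"
proof -
  have "w e \<le> sigma u v" if "e \<in> E" "u \<in> e" "e \<subseteq> S" for e
  proof (rule sigma_ge[OF that(1,2)])
    show "e \<noteq> {u, v}" using that(3) assms by auto
  qed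
  thus ?thesis
    unfolding max_incident_def using finite_E sigma_nonneg by (subst Max_le_iff) auto
qed

lemma max_incident_le_gamma:
  assumes "i \<in> component E c"
  shows "max_incident i S \<le> gamma E w (S \<inter> component E c)"
proof (cases i S rule: max_incident_cases)
  case 1
  thus ?thesis using gamma_nonneg by simp
next
  case (2 e)
  have "e \<subseteq> component E c"
    using edge_at[OF 2(1,2)] component_edge_closed[OF assms] 2 assms by auto
  thus ?thesis using 2 edge_weight_le_gamma by simp
qed

lemma dominant_pair_commute:
  assumes "dominant_pair E w u v"
  shows "dominant_pair E w v u"
proof -
  have vu: "{v, u} = {u, v}" by auto
  show ?thesis using assms unfolding dominant_pair_def vu by (simp add: add.commute)
qed

lemma dominant_pair_edge_le:
  assumes "dominant_pair E w u v" "{u, u'} \<in> E" "{u, u'} \<noteq> {u, v}"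
  shows "w {u, u'} \<le> w {u, v}"
proof (cases "\<forall>v'. {v, v'} \<in> E \<longrightarrow> {v, v'} = {u, v}")
  case True
  thus ?thesis using assms unfolding dominant_pair_def by blast
next
  case False
  then obtain v' where "{v, v'} \<in> E" "{v, v'} \<noteq> {u, v}" by blast
  hence "w {u, u'} + w {v, v'} \<le> w {u, v}" "0 < w {v, v'}"
    using assms edge_weight_pos unfolding dominant_pair_def by blast+
  thus ?thesis by linarith
qed

lemma dominant_pair_sigma:
  assumes "dominant_pair E w u v"
  shows "sigma u v + sigma v u \<le> w {u, v}"
proof -
  have uvE: "{u, v} \<in> E" using assms unfolding dominant_pair_def by blast
  have vu: "{v, u} = {u, v}" by (simp add: insert_commute)
  show ?thesis
  proof (cases u v rule: sigma_cases)
    case 1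
    show ?thesis
    proof (cases v u rule: sigma_cases)
      case 2
      thus ?thesis using 1 dominant_pair_edge_le[OF dominant_pair_commute[OF assms]] vu by simp
    qed (use 1 edge_weight_pos[OF uvE] in simp)
  next
    case (2 u')
    show ?thesis
    proof (cases v u rule: sigma_cases)
      case 1
      thus ?thesis using 2 dominant_pair_edge_le[OF assms] by simp
    next
      case (2 v')
      thus ?thesis using \<open>sigma u v = w {u, u'}\<close> \<open>{u, u'} \<in> E\<close> \<open>{u, u'} \<noteq> {u, v}\<close>
        assms vu unfolding dominant_pair_def by auto
    qed
  qed
qed

end

locale dominant_double_star_graph = weighted_graph +
  assumes dominant_double_stars: "\<forall>C\<in>components V E. 2 \<le> card C \<longrightarrow>
    (\<exists>u v. double_star_centers E C u v \<and> dominant_pair E w u v)"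
begin

definition nontrivial :: "'a \<Rightarrow> bool" where
  "nontrivial i \<longleftrightarrow> 2 \<le> card (component E i)"

definition centers :: "'a \<Rightarrow> 'a \<times> 'a" where
  "centers i = (SOME p. double_star_centers E (component E i) (fst p) (snd p) \<and>
     dominant_pair E w (fst p) (snd p))"

definition center_u :: "'a \<Rightarrow> 'a" where
  "center_u i = fst (centers i)"

definition center_v :: "'a \<Rightarrow> 'a" where
  "center_v i = snd (centers i)"

lemma centers_spec:
  assumes "i \<in> V" "nontrivial i"
  shows "double_star_centers E (component E i) (center_u i) (center_v i)"
    "dominant_pair E w (center_u i) (center_v i)"
proof -
  have "component E i \<in> components V E" using assms(1) by (simp add: components_def)
  then obtain u v where "double_star_centers E (component E i) (fst (u, v)) (snd (u, v)) \<and>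
      dominant_pair E w (fst (u, v)) (snd (u, v))"
    using dominant_double_stars assms(2) unfolding nontrivial_def by auto
  hence "double_star_centers E (component E i) (center_u i) (center_v i) \<and>
      dominant_pair E w (center_u i) (center_v i)"
    unfolding center_u_def center_v_def centers_def by (rule someI)
  thus "double_star_centers E (component E i) (center_u i) (center_v i)"
    "dominant_pair E w (center_u i) (center_v i)" by auto
qed

lemma centers_in_component:
  assumes "i \<in> V" "nontrivial i"
  shows "center_u i \<in> component E i" "center_v i \<in> component E i" "center_u i \<noteq> center_v i"
    "{center_u i, center_v i} \<in> E"
  using centers_spec(1)[OF assms] unfolding double_star_centers_def by auto

lemma same_component_centers:
  assumes "j \<in> component E i"
  shows "center_u j = center_u i" "center_v j = center_v i" "nontrivial j \<longleftrightarrow> nontrivial i"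
  using component_eq[OF assms] unfolding center_u_def center_v_def centers_def nontrivial_def by simp_all

definition alloc :: "'a set \<Rightarrow> 'a \<Rightarrow> real" where
  "alloc S i =
    (if nontrivial i \<and> i = center_u i then
       (if center_v i \<in> S then sigma i (center_v i) else max_incident i S)
     else if nontrivial i \<and> i = center_v i then
       (if center_u i \<in> S then w {center_u i, i} - sigma (center_u i) i else max_incident i S)
     else 0)"

lemma alloc_center_u:
  assumes "c \<in> V" "nontrivial c"
  shows "alloc S (center_u c) =
    (if center_v c \<in> S then sigma (center_u c) (center_v c) else max_incident (center_u c) S)"
  using same_component_centers[OF centers_in_component(1)[OF assms]] assms(2)
  unfolding alloc_def by simp

lemma alloc_center_v:
  assumes "c \<in> V" "nontrivial c"
  shows "alloc S (center_v c) =
    (if center_u c \<in> S then w {center_u c, center_v c} - sigma (center_u c) (center_v c)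
     else max_incident (center_v c) S)"
  using same_component_centers[OF centers_in_component(2)[OF assms]] centers_in_component(3)[OF assms]
    assms(2)
  unfolding alloc_def by auto

lemma alloc_noncenter: "\<not> nontrivial i \<or> i \<notin> {center_u i, center_v i} \<Longrightarrow> alloc S i = 0"
  unfolding alloc_def by auto

lemma sigma_v_le_share:
  assumes "c \<in> V" "nontrivial c"
  shows "sigma (center_v c) (center_u c) \<le> w {center_u c, center_v c} - sigma (center_u c) (center_v c)"
  using dominant_pair_sigma[OF centers_spec(2)[OF assms]] by linarith

lemma alloc_nonneg:
  assumes "j \<in> V"
  shows "0 \<le> alloc S j"
proof -
  consider "\<not> nontrivial j \<or> j \<notin> {center_u j, center_v j}" | "nontrivial j" "j = center_u j"
    | "nontrivial j" "j = center_v j" by blast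
  thus ?thesis
  proof cases
    case 1
    thus ?thesis using alloc_noncenter by simp
  next
    case 2
    thus ?thesis using alloc_center_u[OF assms 2(1), of S] sigma_nonneg max_incident_nonneg by simp
  next
    case 3
    thus ?thesis
      using alloc_center_v[OF assms 3(1), of S] sigma_v_le_share[OF assms 3(1)] sigma_nonneg
        max_incident_nonneg
      by (smt (verit))
  qed
qed

lemma alloc_mono:
  assumes "S \<subseteq> T" "T \<subseteq> V" "j \<in> S"
  shows "alloc S j \<le> alloc T j"
proof -
  have j: "j \<in> V" using assms by auto
  consider "\<not> nontrivial j \<or> j \<notin> {center_u j, center_v j}" | "nontrivial j" "j = center_u j"
    | "nontrivial j" "j = center_v j" by blast
  thus ?thesis
  proof cases
    case 1
    thus ?thesis using alloc_noncenter by simp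
  next
    case 2
    thus ?thesis
      using alloc_center_u[OF j 2(1)] max_incident_le_sigma[of "center_v j" S j]
        max_incident_mono[OF assms(1)] assms(1)
      by (auto simp: subset_iff)
  next
    case 3
    thus ?thesis
      using alloc_center_v[OF j 3(1)] max_incident_le_sigma[of "center_u j" S j]
        max_incident_mono[OF assms(1)] assms(1) sigma_v_le_share[OF j 3(1)]
      by (auto simp: subset_iff)
  qed
qed

lemma edge_le_alloc_sum:
  assumes "e \<in> E" "e \<subseteq> S" "S \<subseteq> V"
  shows "w e \<le> (\<Sum>i\<in>e. alloc S i)"
proof -
  obtain a b where ab: "a \<in> V" "e = {a, b}" using assms(1) by (rule edgeE)
  let ?u = "center_u a" and ?v = "center_v a"
  have a: "nontrivial a" using card_component_edge assms(1) ab(2) unfolding nontrivial_def by simp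
  have "e \<subseteq> component E a"
    using in_component component_edge_closed[OF in_component] assms(1) ab(2) by auto
  hence uv: "?u \<in> e \<or> ?v \<in> e"
    using centers_spec(1)[OF ab(1) a] assms(1) unfolding double_star_centers_def by blast
  have share: "alloc S y \<le> (\<Sum>i\<in>e. alloc S i)" if "y \<in> e" for y
    using alloc_nonneg assms that ab(2) by (intro member_le_sum) auto
  show ?thesis
  proof (cases "e = {?u, ?v}")
    case True
    hence "(\<Sum>i\<in>e. alloc S i) = alloc S ?u + alloc S ?v"
      using centers_in_component(3)[OF ab(1) a] by simp
    also have "\<dots> = w e"
      using alloc_center_u[OF ab(1) a] alloc_center_v[OF ab(1) a] True assms(2) by simp
    finally show ?thesis by simp
  next
    case False
    hence not_uv: "e \<noteq> {?v, ?u}" by (simp add: insert_commute)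
    from uv show ?thesis
    proof
      assume "?u \<in> e"
      hence "w e \<le> alloc S ?u"
        using alloc_center_u[OF ab(1) a] sigma_ge[OF assms(1) _ False]
          max_incident_ge[OF assms(1) _ assms(2)]
        by simp
      thus ?thesis using share[OF \<open>?u \<in> e\<close>] by linarith
    next
      assume "?v \<in> e"
      hence "w e \<le> alloc S ?v"
        using alloc_center_v[OF ab(1) a] sigma_ge[OF assms(1) _ not_uv]
          max_incident_ge[OF assms(1) _ assms(2)] sigma_v_le_share[OF ab(1) a]
        by auto
      thus ?thesis using share[OF \<open>?v \<in> e\<close>] by linarith
    qed
  qed
qed

lemma gamma_le_alloc_sum:
  assumes "S \<subseteq> V"
  shows "gamma E w S \<le> (\<Sum>i\<in>S. alloc S i)"
proof (rule gamma_le)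
  fix M assume M: "matching_in E S M"
  hence ME: "M \<subseteq> E" and MS: "\<And>e. e \<in> M \<Longrightarrow> e \<subseteq> S"
    and disj: "\<And>e f. e \<in> M \<Longrightarrow> f \<in> M \<Longrightarrow> e \<noteq> f \<Longrightarrow> e \<inter> f = {}"
    unfolding matching_in_def by auto
  have fin: "\<And>e. e \<in> M \<Longrightarrow> finite e" using ME by (auto elim: edgeE)
  have "sum w M \<le> (\<Sum>e\<in>M. \<Sum>i\<in>e. alloc S i)"
    using edge_le_alloc_sum ME MS assms by (intro sum_mono) auto
  also have "\<dots> = (\<Sum>i\<in>\<Union>M. alloc S i)"
    using sum.Union_disjoint[of M "alloc S"] fin disj by (simp add: comp_def)
  also have "\<dots> \<le> (\<Sum>i\<in>S. alloc S i)"
  proof (rule sum_mono2)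
    show "finite S" using assms finite_subset[OF _ finite_V] by simp
    show "\<Union>M \<subseteq> S" using MS by blast
    show "\<And>i. i \<in> S - \<Union>M \<Longrightarrow> 0 \<le> alloc S i" using alloc_nonneg assms by auto
  qed
  finally show "sum w M \<le> (\<Sum>i\<in>S. alloc S i)" .
qed

lemma alloc_component_sum_le:
  assumes "c \<in> V"
  shows "(\<Sum>i\<in>S \<inter> component E c. alloc S i) \<le> gamma E w (S \<inter> component E c)"
proof (cases "nontrivial c")
  case False
  hence "alloc S i = 0" if "i \<in> component E c" for i
    using alloc_noncenter same_component_centers(3)[OF that] by simp
  thus ?thesis using gamma_nonneg by simp
next
  case True
  let ?C = "component E c" and ?u = "center_u c" and ?v = "center_v c"
  have uv: "?u \<in> ?C" "?v \<in> ?C" "?u \<noteq> ?v" "{?u, ?v} \<in> E"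
    using centers_in_component[OF assms True] by auto
  have "alloc S i = 0" if "i \<in> ?C" "i \<notin> {?u, ?v}" for i
    using alloc_noncenter same_component_centers(1,2)[OF that(1)] that(2) by simp
  hence "(\<Sum>i\<in>S \<inter> ?C. alloc S i) = (\<Sum>i\<in>S \<inter> {?u, ?v}. alloc S i)"
    using uv(1,2) by (intro sum.mono_neutral_right) (auto intro: finite_subset[OF _ finite_component[OF assms]])
  also have "\<dots> \<le> gamma E w (S \<inter> ?C)"
  proof (cases "?u \<in> S"; cases "?v \<in> S")
    assume "?u \<in> S" "?v \<in> S"
    hence "(\<Sum>i\<in>S \<inter> {?u, ?v}. alloc S i) = w {?u, ?v}"
      using alloc_center_u[OF assms True] alloc_center_v[OF assms True] uv(3) by simp
    thus ?thesis using edge_weight_le_gamma uv \<open>?u \<in> S\<close> \<open>?v \<in> S\<close> by simp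
  next
    assume "?u \<in> S" "?v \<notin> S"
    thus ?thesis using alloc_center_u[OF assms True] max_incident_le_gamma[OF uv(1)] by simp
  next
    assume "?u \<notin> S" "?v \<in> S"
    thus ?thesis using alloc_center_v[OF assms True] max_incident_le_gamma[OF uv(2)] by simp
  next
    assume "?u \<notin> S" "?v \<notin> S"
    thus ?thesis using gamma_nonneg by simp
  qed
  finally show ?thesis .
qed

lemma alloc_sum_le_gamma:
  assumes "S \<subseteq> V"
  shows "(\<Sum>i\<in>S. alloc S i) \<le> gamma E w S"
proof -
  let ?part = "\<lambda>C. {x \<in> S. component E x = C}"
  have fin: "finite S" using assms finite_subset[OF _ finite_V] by simp
  have part: "?part (component E c) = S \<inter> component E c" for c
  proof -
    have "component E x = component E c \<longleftrightarrow> x \<in> component E c" for x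
      using component_eq[of x c] in_component[of x] by auto
    thus ?thesis by auto
  qed
  have "(\<Sum>i\<in>S. alloc S i) = (\<Sum>C\<in>component E ` S. \<Sum>i\<in>?part C. alloc S i)"
    using sum.image_gen[OF fin] .
  also have "\<dots> \<le> (\<Sum>C\<in>component E ` S. gamma E w (?part C))"
    using alloc_component_sum_le assms part by (intro sum_mono) auto
  also have "\<dots> \<le> gamma E w (\<Union>C\<in>component E ` S. ?part C)"
    using fin by (intro gamma_sum_le_UN) auto
  also have "(\<Union>C\<in>component E ` S. ?part C) = S" by auto
  finally show ?thesis .
qed

lemma alloc_is_PMAS: "is_PMAS V E w alloc"
  unfolding is_PMAS_def
  using alloc_sum_le_gamma gamma_le_alloc_sum alloc_mono by (auto intro: order_antisym)

end

theorem mainTheorem14: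
  fixes V :: "'a set" and E :: "'a set set" and w :: "'a set \<Rightarrow> real"
  assumes "simple_graph V E"
    and "\<forall>e\<in>E. w e > 0"
  shows "population_monotonic V E w \<longleftrightarrow>
    (\<forall>C\<in>components V E. card C \<ge> 2 \<longrightarrow>
       (\<exists>u v. double_star_centers E C u v \<and> dominant_pair E w u v))"
proof -
  interpret weighted_graph V E w using assms by unfold_locales
  show ?thesis
  proof
    assume "population_monotonic V E w"
    then obtain x where "is_PMAS V E w x" unfolding population_monotonic_def by blast
    thus "\<forall>C\<in>components V E. card C \<ge> 2 \<longrightarrow>
        (\<exists>u v. double_star_centers E C u v \<and> dominant_pair E w u v)"
      using pmas_component_dominant_double_star by blast
  next
    assume "\<forall>C\<in>components V E. card C \<ge> 2 \<longrightarrow>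
        (\<exists>u v. double_star_centers E C u v \<and> dominant_pair E w u v)"
    then interpret dominant_double_star_graph V E w by unfold_locales
    show "population_monotonic V E w"
      unfolding population_monotonic_def using alloc_is_PMAS by blast
  qed
qed

end
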